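(* In the setting below, the natural homomorphism $W(E_7)\to O(A_{L_+})$ is surjective. Moreover, the action of $O(A_{L_+})$ on $A_{L_+}$ is transitive on each of the sets $C_1=\{x: q_{L_+}(x)=-1/2\}$ and $C_2=\{x:q_{L_+}(x)=1/2\}$, and has exactly two orbits on each of the sets $C_3=\{x:q_{L_+}(x)=1\}$ and $C_4=\{x:q_{L_+}(x)=0\}$.
   Context: Let $C\subset\mathbb P^2$ be a smooth plane quartic $\{f=0\}$, $X_C=\{t^4=f\}\subset\mathbb P^3$ (a $K3$ surface), $\tau(x:y:z:t)=(x:y:z:-t)$, $S_C=X_C/\langle\tau\rangle$ (a Del Pezzo surface of degree 2, the blow-up of $\mathbb P^2$ in seven points, with $Pic(S_C)$ having basis $e_0,\dots,e_7$: $e_0$ the pull-back of a line, $e_i$ the exceptional curves; canonical class $k=-3e_0+e_1+\dots+e_7$), and $\pi_2:X_C\to S_C$ the quotient map. Let $L_+=\{x\in H^2(X_C,\mathbb Z):\tau^*x=x\}$, which equals $\pi_2^*Pic(S_C)$. $A_{L_+}=L_+^*/L_+\cong(\mathbb Z/2)^8$ is the discriminant group with discriminant quadratic form $q_{L_+}:A_{L_+}\to\mathbb Q/2\mathbb Z$, $q(x+L_+)=(x,x)\bmod 2\mathbb Z$, and $O(A_{L_+})$ is the group of automorphisms of $A_{L_+}$ preserving $q_{L_+}$. The Weyl group $W(E_7)$ of the root lattice $k^\perp\subset Pic(S_C)$ acts on $Pic(S_C)$ fixing $k$, hence on $L_+$ by pull-back, and thus on $A_{L_+}$. *)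

theory Defs
  imports Complex_Main
begin

(* Vectors of Q^8 = Pic(S_C) (x) Q, coordinates w.r.t. the basis e_0,...,e_7,
   stored as functions nat => rat vanishing at indices >= 8. *)
type_synonym qvec = "nat \<Rightarrow> rat"

definition supp8 :: "qvec \<Rightarrow> bool" where
  "supp8 x \<longleftrightarrow> (\<forall>i\<ge>8. x i = 0)"

definition pic_form :: "qvec \<Rightarrow> qvec \<Rightarrow> rat" where
  "pic_form x y = x 0 * y 0 - (\<Sum>i\<in>{1..7}. x i * y i)"

definition Pic :: "qvec set" where
  "Pic = {x. supp8 x \<and> (\<forall>i. x i \<in> \<int>)}"

definition canon :: qvec where
  "canon = (\<lambda>i. if i = 0 then -3 else if i \<le> 7 then 1 else 0)"

definition E7_roots :: "qvec set" where
  "E7_roots = {r \<in> Pic. pic_form r canon = 0 \<and> pic_form r r = -2}"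

(* reflection s_r(x) = x - 2 (x,r)/(r,r) r = x + (x,r) r  (linear, so it acts on Q^8) *)
definition refl :: "qvec \<Rightarrow> qvec \<Rightarrow> qvec" where
  "refl r x = (\<lambda>i. x i + pic_form x r * r i)"

inductive_set W_E7 :: "(qvec \<Rightarrow> qvec) set" where
  W_id: "id \<in> W_E7"
| W_step: "r \<in> E7_roots \<Longrightarrow> w \<in> W_E7 \<Longrightarrow> refl r \<circ> w \<in> W_E7"

(* L_+ = pi_2^* Pic(S_C); pi_2^* multiplies the intersection form by deg pi_2 = 2.
   We identify pi_2^* e_i with e_i, so L_+ has underlying group Pic and form 2(,). *)
definition Lp_form :: "qvec \<Rightarrow> qvec \<Rightarrow> rat" where
  "Lp_form x y = 2 * pic_form x y"

definition Lplus :: "qvec set" where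
  "Lplus = Pic"

definition Lplus_dual :: "qvec set" where
  "Lplus_dual = {x. supp8 x \<and> (\<forall>v\<in>Lplus. Lp_form x v \<in> \<int>)}"

definition coset :: "qvec \<Rightarrow> qvec set" where
  "coset x = {(\<lambda>i. x i + v i) | v. v \<in> Lplus}"

definition A_Lp :: "qvec set set" where
  "A_Lp = coset ` Lplus_dual"

definition A_add :: "qvec set \<Rightarrow> qvec set \<Rightarrow> qvec set" where
  "A_add a b = {(\<lambda>i. x i + y i) | x y. x \<in> a \<and> y \<in> b}"

definition q_is :: "qvec set \<Rightarrow> rat \<Rightarrow> bool" where
  "q_is a r \<longleftrightarrow> (\<exists>x\<in>a. \<exists>k::int. Lp_form x x = r + 2 * of_int k)"

definition O_A :: "(qvec set \<Rightarrow> qvec set) set" where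
  "O_A = {f. bij_betw f A_Lp A_Lp
            \<and> (\<forall>a\<in>A_Lp. \<forall>b\<in>A_Lp. f (A_add a b) = A_add (f a) (f b))
            \<and> (\<forall>a\<in>A_Lp. \<forall>r. q_is (f a) r \<longleftrightarrow> q_is a r)}"

definition W_act :: "(qvec \<Rightarrow> qvec) \<Rightarrow> qvec set \<Rightarrow> qvec set" where
  "W_act w a = w ` a"

definition O_orbit :: "qvec set \<Rightarrow> qvec set set" where
  "O_orbit a = {f a | f. f \<in> O_A}"

definition C_set :: "rat \<Rightarrow> qvec set set" where
  "C_set r = {a \<in> A_Lp. q_is a r}"

end

(*
  A_{L_+} = (1/2) Pic / Pic is F_2^8, the class of v/2 for v in {0,1}^8; its discriminant form is
  q(v/2) = (v_0 - v_1 - ... - v_7)/2 mod 2, with the dot product mod 2 as bilinear form. The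
  reflection in an E_7 root r acts as the transvection v -> v + (v.p) p in the residue p of r,
  and every p <> (1,...,1) with q(p/2) = 1 is such a residue.

  An isometry g of the discriminant form fixes (1,...,1), the characteristic vector of the
  bilinear form. If g fixes e_0, ..., e_(k-1), a product of root transvections fixing these
  vectors moves g e_k back to e_k, so by induction g is a product of root transvections: this is
  the surjectivity of W(E_7) -> O(A_{L_+}). The root transvections act transitively on each level
  set of q with 0 and (1,...,1) removed, and these two vectors (on the levels 0 and 1) are fixed
  by O(A_{L_+}), which gives the orbit counts. The finitely many moves needed are explicit
  witnesses, checked by evaluation.
*)
theory Submission
  imports Defs
begin

section \<open>The quadratic space F_2^8\<close>

definition weight :: "bool list \<Rightarrow> nat" where
  "weight v = length (filter id v)"

definition vadd :: "bool list \<Rightarrow> bool list \<Rightarrow> bool list" where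
  "vadd v w = map2 (\<noteq>) v w"

definition bdot :: "bool list \<Rightarrow> bool list \<Rightarrow> bool" where
  "bdot v w = odd (weight (map2 (\<and>) v w))"

(* q4 v = 2 q_{L_+}(v/2) in Z/4Z, where q_{L_+}(v/2) = (v_0 - v_1 - ... - v_7)/2 mod 2Z. *)
definition q4 :: "bool list \<Rightarrow> int" where
  "q4 v = (of_bool (hd v) - int (weight (tl v))) mod 4"

definition transvection :: "bool list \<Rightarrow> bool list \<Rightarrow> bool list" where
  "transvection p v = (if bdot p v then vadd v p else v)"

definition transvections :: "bool list list \<Rightarrow> bool list \<Rightarrow> bool list" where
  "transvections ps v = foldr transvection ps v"

definition F8 :: "bool list set" where
  "F8 = {v. length v = 8}"

definition char_vec :: "nat list \<Rightarrow> bool list" where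
  "char_vec xs = map (\<lambda>i. i \<in> set xs) [0..<8]"

definition unit_vec :: "nat \<Rightarrow> bool list" where
  "unit_vec k = char_vec [k]"

definition zero8 :: "bool list" where
  "zero8 = replicate 8 False"

definition ones8 :: "bool list" where
  "ones8 = replicate 8 True"

(* Exactly the residues mod 2 of the E_7 roots; root_lift lifts each of them to a root. *)
definition root_residue :: "bool list \<Rightarrow> bool" where
  "root_residue p \<longleftrightarrow> length p = 8 \<and> q4 p = 2 \<and> p \<noteq> ones8"

definition isometry :: "(bool list \<Rightarrow> bool list) \<Rightarrow> bool" where
  "isometry g \<longleftrightarrow> bij_betw g F8 F8
     \<and> (\<forall>a\<in>F8. \<forall>b\<in>F8. g (vadd a b) = vadd (g a) (g b))
     \<and> (\<forall>v\<in>F8. q4 (g v) = q4 v)"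

lemma vadd_Nil [simp]: "vadd [] w = []" "vadd v [] = []"
  by (simp_all add: vadd_def)

lemma weight_Nil [simp]: "weight [] = 0"
  by (simp add: weight_def)

lemma weight_Cons [simp]: "weight (x # xs) = of_bool x + weight xs"
  by (simp add: weight_def)

lemma vadd_Cons [simp]: "vadd (x # xs) (y # ys) = (x \<noteq> y) # vadd xs ys"
  by (simp add: vadd_def)

lemma length_vadd [simp]: "length (vadd v w) = min (length v) (length w)"
  by (simp add: vadd_def)

lemma nth_vadd: "i < length v \<Longrightarrow> i < length w \<Longrightarrow> vadd v w ! i = (v ! i \<noteq> w ! i)"
  by (simp add: vadd_def)

lemma vadd_assoc: "vadd (vadd u v) w = vadd u (vadd v w)"
  by (rule nth_equalityI) (auto simp: nth_vadd)

lemma vadd_self: "vadd v v = replicate (length v) False"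
  by (rule nth_equalityI) (auto simp: nth_vadd)

lemma weight_vadd:
  "length v = length w \<Longrightarrow> weight (vadd v w) + 2 * weight (map2 (\<and>) v w) = weight v + weight w"
  by (induction v w rule: list_induct2) auto

lemma weight_map2_conj_comm: "weight (map2 (\<and>) v w) = weight (map2 (\<and>) w v)"
proof (induction v arbitrary: w)
  case (Cons x xs)
  then show ?case by (cases w) auto
qed simp

lemma bdot_comm: "bdot v w = bdot w v"
  unfolding bdot_def by (simp only: weight_map2_conj_comm)

lemma bdot_vadd:
  "length a = length b \<Longrightarrow> length p = length a \<Longrightarrow> bdot p (vadd a b) \<longleftrightarrow> bdot p a \<noteq> bdot p b"
proof (induction a b arbitrary: p rule: list_induct2)
  case (Cons x xs y ys)
  then obtain z zs where "p = z # zs" by (cases p) auto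
  with Cons show ?case by (auto simp: bdot_def)
qed (simp add: bdot_def)

lemma double_mod_4: "(2 * n) mod 4 = 2 * of_bool (odd n)" for n :: int
  using mod_mult_mult1[of 2 n 2] by (simp add: mod2_eq_if)

lemma q4_vadd:
  assumes "length v = length w" "v \<noteq> []"
  shows "q4 (vadd v w) = (q4 v + q4 w + 2 * of_bool (bdot v w)) mod 4"
proof -
  obtain x xs y ys where v: "v = x # xs" and w: "w = y # ys" and l: "length xs = length ys"
    using assms by (cases v; cases w) auto
  define a where "a = of_bool x - int (weight xs)"
  define b where "b = of_bool y - int (weight ys)"
  define m where "m = of_bool (x \<and> y) + int (weight (map2 (\<and>) xs ys))"
  have "int (weight (vadd xs ys)) = int (weight xs) + int (weight ys) - 2 * int (weight (map2 (\<and>) xs ys))"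
    using weight_vadd[OF l] by linarith
  moreover have "(of_bool (x \<noteq> y) :: int) = of_bool x + of_bool y - 2 * of_bool (x \<and> y)"
    by (cases x; cases y) auto
  ultimately have "of_bool (x \<noteq> y) - int (weight (vadd xs ys)) = a + b + 2 * m + 4 * - of_bool (x \<and> y)"
    unfolding a_def b_def m_def by simp
  then have "q4 (vadd v w) = (a + b + 2 * m) mod 4"
    unfolding v w q4_def by (simp only: vadd_Cons list.sel mod_mult_self2)
  also have "\<dots> = (a mod 4 + b mod 4 + (2 * m) mod 4) mod 4"
    by (metis mod_add_eq mod_add_left_eq)
  also have "\<dots> = (q4 v + q4 w + 2 * of_bool (bdot v w)) mod 4"
  proof -
    have "a mod 4 = q4 v" "b mod 4 = q4 w" unfolding a_def b_def v w q4_def by simp_all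
    moreover have "odd m \<longleftrightarrow> bdot v w" unfolding m_def v w bdot_def by simp
    ultimately show ?thesis by (simp only: double_mod_4)
  qed
  finally show ?thesis .
qed

lemma odd_q4: "v \<noteq> [] \<Longrightarrow> odd (q4 v) \<longleftrightarrow> odd (weight v)"
  by (cases v) (auto simp: q4_def even_mod_4_div_2 dvd_mod_iff)

lemma bdot_self: "bdot v v \<longleftrightarrow> odd (weight v)"
  by (induction v) (auto simp: bdot_def)

lemma bdot_ones8: "v \<in> F8 \<Longrightarrow> bdot ones8 v \<longleftrightarrow> odd (weight v)"
proof -
  have "length v = n \<Longrightarrow> map2 (\<and>) (replicate n True) v = v" for n
    by (induction v arbitrary: n) (auto simp: Suc_length_conv)
  then show "v \<in> F8 \<Longrightarrow> ?thesis" by (simp add: F8_def ones8_def bdot_def)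
qed

lemma bdot_zero8: "\<not> bdot p zero8"
proof -
  have "map2 (\<and>) p zero8 = replicate (min (length p) 8) False"
    by (rule nth_equalityI) (auto simp: zero8_def)
  then show ?thesis by (simp add: bdot_def weight_def)
qed

lemma length_char_vec [simp]: "length (char_vec xs) = 8"
  by (simp add: char_vec_def)

lemma length_unit_vec [simp]: "length (unit_vec k) = 8"
  by (simp add: unit_vec_def)

lemma nth_char_vec: "i < 8 \<Longrightarrow> char_vec xs ! i \<longleftrightarrow> i \<in> set xs"
  by (simp add: char_vec_def)

lemma bdot_unit_vec:
  assumes "length p = 8" "j < 8"
  shows "bdot p (unit_vec j) \<longleftrightarrow> p ! j"
proof -
  have "filter id (map2 (\<and>) p (unit_vec j)) = (if p ! j then [True] else [])"
  proof -
    have "map2 (\<and>) p (unit_vec j) = map (\<lambda>i. i = j \<and> p ! i) [0..<8]"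
      using assms(1) by (intro nth_equalityI) (auto simp: unit_vec_def nth_char_vec)
    moreover have "filter id (map (\<lambda>i. i = j \<and> p ! i) [0..<n]) = (if j < n \<and> p ! j then [True] else [])" for n
      by (induction n) auto
    ultimately show ?thesis using assms(2) by simp
  qed
  then show ?thesis by (simp add: bdot_def weight_def)
qed

lemma root_residue_length: "root_residue p \<Longrightarrow> length p = 8"
  by (simp add: root_residue_def)

lemma root_residue_isotropic: "root_residue p \<Longrightarrow> \<not> bdot p p"
proof -
  assume p: "root_residue p"
  then have "p \<noteq> []" "q4 p = 2" by (auto simp: root_residue_def)
  then show ?thesis by (simp add: bdot_self flip: odd_q4)
qed

lemma vadd_zero8: "v \<in> F8 \<Longrightarrow> vadd v zero8 = v"
  by (intro nth_equalityI) (auto simp: F8_def zero8_def nth_vadd)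

lemma F8_vadd [simp]: "v \<in> F8 \<Longrightarrow> w \<in> F8 \<Longrightarrow> vadd v w \<in> F8"
  by (simp add: F8_def)

lemma F8_consts [simp]: "zero8 \<in> F8" "ones8 \<in> F8" "char_vec xs \<in> F8" "unit_vec k \<in> F8"
  by (simp_all add: F8_def zero8_def ones8_def unit_vec_def)

lemma transvection_F8: "root_residue p \<Longrightarrow> v \<in> F8 \<Longrightarrow> transvection p v \<in> F8"
  by (simp add: transvection_def F8_def root_residue_length)

lemma transvection_vadd:
  assumes "root_residue p" "a \<in> F8" "b \<in> F8"
  shows "transvection p (vadd a b) = vadd (transvection p a) (transvection p b)"
proof -
  have l: "length p = 8" "length a = 8" "length b = 8"
    using assms by (auto simp: F8_def root_residue_length)
  then have "bdot p (vadd a b) \<longleftrightarrow> bdot p a \<noteq> bdot p b" by (simp add: bdot_vadd)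
  moreover have "vadd (vadd a p) b = vadd (vadd a b) p" "vadd a (vadd b p) = vadd (vadd a b) p"
    "vadd (vadd a p) (vadd b p) = vadd a b"
    using l by (auto intro!: nth_equalityI simp: nth_vadd)
  ultimately show ?thesis by (auto simp: transvection_def)
qed

lemma q4_transvection:
  assumes "root_residue p" "v \<in> F8"
  shows "q4 (transvection p v) = q4 v"
proof (cases "bdot p v")
  case True
  have l: "length v = length p" "v \<noteq> []" using assms by (auto simp: F8_def root_residue_length)
  have "q4 (vadd v p) = (q4 v + 2 + 2) mod 4"
    using q4_vadd[OF l] assms(1) True by (simp add: root_residue_def bdot_comm)
  also have "\<dots> = q4 v" by (simp add: q4_def)
  finally show ?thesis using True by (simp add: transvection_def)
qed (simp add: transvection_def)

lemma transvection_transvection: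
  assumes "root_residue p" "v \<in> F8"
  shows "transvection p (transvection p v) = v"
proof (cases "bdot p v")
  case True
  have l: "length v = 8" "length p = 8" using assms by (auto simp: F8_def root_residue_length)
  then have "bdot p (vadd v p)" using True root_residue_isotropic[OF assms(1)] by (simp add: bdot_vadd)
  then show ?thesis using True l by (simp add: transvection_def vadd_assoc vadd_self vadd_zero8[unfolded zero8_def] F8_def)
qed (simp add: transvection_def)

lemma transvection_ones8: "root_residue p \<Longrightarrow> transvection p ones8 = ones8"
  using root_residue_isotropic[of p]
  by (simp add: transvection_def bdot_comm[of p] bdot_ones8 root_residue_def bdot_self F8_def)

lemma transvection_zero8: "transvection p zero8 = zero8"
  by (simp add: transvection_def bdot_zero8)

lemma transvection_unit_vec: "root_residue p \<Longrightarrow> j < 8 \<Longrightarrow> \<not> p ! j \<Longrightarrow> transvection p (unit_vec j) = unit_vec j"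
  by (simp add: transvection_def bdot_unit_vec root_residue_length)

lemma transvections_Nil [simp]: "transvections [] v = v"
  and transvections_Cons [simp]: "transvections (p # ps) v = transvection p (transvections ps v)"
  and transvections_append: "transvections (ps @ qs) v = transvections ps (transvections qs v)"
  by (simp_all add: transvections_def)

lemma transvections_F8: "list_all root_residue ps \<Longrightarrow> v \<in> F8 \<Longrightarrow> transvections ps v \<in> F8"
  by (induction ps) (auto simp: transvection_F8)

lemma transvections_vadd:
  "list_all root_residue ps \<Longrightarrow> a \<in> F8 \<Longrightarrow> b \<in> F8 \<Longrightarrow>
    transvections ps (vadd a b) = vadd (transvections ps a) (transvections ps b)"
  by (induction ps) (auto simp: transvection_vadd transvections_F8)

lemma q4_transvections: "list_all root_residue ps \<Longrightarrow> v \<in> F8 \<Longrightarrow> q4 (transvections ps v) = q4 v"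
  by (induction ps) (auto simp: q4_transvection transvections_F8)

lemma transvections_rev:
  "list_all root_residue ps \<Longrightarrow> v \<in> F8 \<Longrightarrow> transvections (rev ps) (transvections ps v) = v"
  by (induction ps) (auto simp: transvections_append transvection_transvection transvections_F8)

lemma transvections_ones8: "list_all root_residue ps \<Longrightarrow> transvections ps ones8 = ones8"
  by (induction ps) (auto simp: transvection_ones8)

lemma transvections_zero8: "transvections ps zero8 = zero8"
  by (induction ps) (auto simp: transvection_zero8)

lemma isometry_transvections: "list_all root_residue ps \<Longrightarrow> isometry (transvections ps)"
  unfolding isometry_def
proof (intro conjI ballI)
  assume ps: "list_all root_residue ps"
  show "bij_betw (transvections ps) F8 F8"
    by (rule bij_betw_byWitness[where f' = "transvections (rev ps)"])
      (use ps transvections_rev[of "rev ps"] in \<open>auto simp: transvections_rev transvections_F8\<close>)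
qed (simp_all add: transvections_vadd q4_transvections)

lemma isometry_comp: "isometry f \<Longrightarrow> isometry g \<Longrightarrow> isometry (f \<circ> g)"
  unfolding isometry_def by (auto simp: bij_betw_trans bij_betwE)

lemma isometry_F8: "isometry g \<Longrightarrow> v \<in> F8 \<Longrightarrow> g v \<in> F8"
  and isometry_vadd: "isometry g \<Longrightarrow> a \<in> F8 \<Longrightarrow> b \<in> F8 \<Longrightarrow> g (vadd a b) = vadd (g a) (g b)"
  and isometry_q4: "isometry g \<Longrightarrow> v \<in> F8 \<Longrightarrow> q4 (g v) = q4 v"
  by (auto simp: isometry_def bij_betwE)

lemma isometry_surj: "isometry g \<Longrightarrow> y \<in> F8 \<Longrightarrow> \<exists>x\<in>F8. y = g x"
  unfolding isometry_def bij_betw_def by blast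

lemma isometry_zero8: "isometry g \<Longrightarrow> g zero8 = zero8"
proof -
  assume g: "isometry g"
  have "g zero8 = vadd (g zero8) (g zero8)"
    using isometry_vadd[OF g, of zero8 zero8] by (simp add: vadd_zero8)
  also have "\<dots> = zero8"
    using isometry_F8[OF g, of zero8] by (simp add: vadd_self F8_def zero8_def)
  finally show ?thesis .
qed

lemma bdot_iff_q4:
  assumes "length v = length w" "v \<noteq> []"
  shows "bdot v w \<longleftrightarrow> q4 (vadd v w) \<noteq> (q4 v + q4 w) mod 4"
proof -
  have "(s + 2) mod 4 \<noteq> s mod 4" for s :: int
    by (simp add: mod_eq_dvd_iff)
  then show ?thesis using q4_vadd[OF assms] by auto
qed

lemma isometry_bdot:
  assumes g: "isometry g" and ab: "a \<in> F8" "b \<in> F8"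
  shows "bdot (g a) (g b) \<longleftrightarrow> bdot a b"
proof -
  have "g a \<in> F8" "g b \<in> F8" using ab isometry_F8[OF g] by auto
  then have "bdot (g a) (g b) \<longleftrightarrow> q4 (vadd (g a) (g b)) \<noteq> (q4 (g a) + q4 (g b)) mod 4"
    by (intro bdot_iff_q4) (auto simp: F8_def)
  also have "\<dots> \<longleftrightarrow> q4 (vadd a b) \<noteq> (q4 a + q4 b) mod 4"
    using ab by (simp add: isometry_q4[OF g] flip: isometry_vadd[OF g])
  also have "\<dots> \<longleftrightarrow> bdot a b"
    using ab by (intro bdot_iff_q4[symmetric]) (auto simp: F8_def)
  finally show ?thesis .
qed

lemma odd_q4_F8: "v \<in> F8 \<Longrightarrow> odd (q4 v) \<longleftrightarrow> odd (weight v)"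
  by (intro odd_q4) (auto simp: F8_def)

lemma eq_if_bdot_unit_vec_eq:
  assumes "c \<in> F8" "d \<in> F8" "\<forall>j<8. bdot c (unit_vec j) = bdot d (unit_vec j)"
  shows "c = d"
  using assms by (intro nth_equalityI) (auto simp: F8_def bdot_unit_vec)

lemma isometry_ones8: "isometry g \<Longrightarrow> g ones8 = ones8"
proof -
  assume g: "isometry g"
  \<comment> \<open>ones8 is the characteristic vector of the form: bdot ones8 x = odd (q4 x).\<close>
  have "bdot (g ones8) y \<longleftrightarrow> bdot ones8 y" if y: "y \<in> F8" for y
  proof -
    obtain x where x: "x \<in> F8" "y = g x" using isometry_surj[OF g y] by blast
    have "bdot (g ones8) (g x) \<longleftrightarrow> odd (weight x)" using g x by (simp add: isometry_bdot bdot_ones8)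
    also have "\<dots> \<longleftrightarrow> odd (weight (g x))"
      using isometry_q4[OF g x(1)] isometry_F8[OF g x(1)] x(1) by (simp flip: odd_q4_F8)
    finally show ?thesis using x isometry_F8[OF g] by (simp add: bdot_ones8)
  qed
  then show ?thesis by (intro eq_if_bdot_unit_vec_eq) (simp_all add: isometry_F8[OF g])
qed

lemma char_vec_Nil: "char_vec [] = zero8"
  by (simp add: char_vec_def zero8_def map_replicate_const)

lemma char_vec_Cons:
  "k < 8 \<Longrightarrow> char_vec (k # xs) = (if k \<in> set xs then char_vec xs else vadd (unit_vec k) (char_vec xs))"
  by (auto intro!: nth_equalityI simp: nth_vadd nth_char_vec unit_vec_def)

lemma isometry_fixes_char_vec:
  assumes "isometry g" "\<forall>k\<in>set xs. k < 8 \<and> g (unit_vec k) = unit_vec k"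
  shows "g (char_vec xs) = char_vec xs"
  using assms(2)
proof (induction xs)
  case Nil
  then show ?case by (simp add: char_vec_Nil isometry_zero8[OF assms(1)])
next
  case (Cons k xs)
  then show ?case by (simp add: char_vec_Cons isometry_vadd[OF assms(1)])
qed

lemma char_vec_support: "v \<in> F8 \<Longrightarrow> char_vec (filter (\<lambda>i. v ! i) [0..<8]) = v"
  by (intro nth_equalityI) (auto simp: F8_def nth_char_vec)

lemma isometry_fixing_unit_vecs:
  assumes "isometry g" "\<forall>j<8. g (unit_vec j) = unit_vec j" "v \<in> F8"
  shows "g v = v"
  using isometry_fixes_char_vec[OF assms(1), of "filter (\<lambda>i. v ! i) [0..<8]"] assms(2,3)
  by (simp add: char_vec_support)

lemma char_vec_upper: "char_vec [k..<8] = vadd ones8 (char_vec [0..<k])"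
  by (intro nth_equalityI) (auto simp: nth_vadd nth_char_vec ones8_def)

section \<open>Isometries are products of root transvections\<close>

definition F8_list :: "bool list list" where
  "F8_list = List.n_lists 8 [False, True]"

lemma set_F8_list: "set F8_list = F8"
  by (auto simp: F8_list_def F8_def set_n_lists)

definition stabilizing_root :: "nat \<Rightarrow> bool list \<Rightarrow> bool" where
  "stabilizing_root k p \<longleftrightarrow> root_residue p \<and> list_all Not (take k p)"

definition root_step :: "nat \<Rightarrow> bool list \<Rightarrow> bool list \<Rightarrow> bool" where
  "root_step k a b \<longleftrightarrow> stabilizing_root k (vadd a b) \<and> transvection (vadd a b) a = b"

(* A route [m_1, ..., m_n] stands for the chain a, m_1, ..., m_n, b, each step of which is a
   transvection in a root residue vanishing on the first k coordinates. *)
definition joined :: "nat \<Rightarrow> nat list list list \<Rightarrow> bool list \<Rightarrow> bool list \<Rightarrow> bool" where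
  "joined k routes a b \<longleftrightarrow> a = b \<or> (\<exists>ms\<in>set ([] # routes). successively (root_step k) (a # map char_vec ms @ [b]))"

definition stabilizer_candidate :: "nat \<Rightarrow> bool list \<Rightarrow> bool" where
  "stabilizer_candidate k c \<longleftrightarrow> list_all Not (take k c) \<and> q4 c = q4 (unit_vec k)
     \<and> q4 (vadd c ones8) = q4 (vadd (unit_vec k) ones8) \<and> c \<noteq> char_vec [k..<8]"

(* For k >= 3 every candidate is a single root step away from unit_vec k. *)
fun stabilizer_routes :: "nat \<Rightarrow> nat list list list" where
  "stabilizer_routes 0 = [[[5,6,7]], [[4,6,7]], [[3,5,7]], [[2,4,6]], [[0,4,5,6,7], [3,6,7]]]"
| "stabilizer_routes (Suc 0) = [[[7]], [[6]], [[5]], [[4]], [[3]]]"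
| "stabilizer_routes (Suc (Suc 0)) = [[[3,4,5,6,7]]]"
| "stabilizer_routes _ = []"

lemma stabilizer_routes_valid:
  "\<forall>k\<in>set [0..<8]. \<forall>c\<in>set F8_list. stabilizer_candidate k c \<longrightarrow> joined k (stabilizer_routes k) c (unit_vec k)"
  by code_simp

lemma successively_root_step_transvections:
  "successively (root_step k) (a # xs) \<Longrightarrow>
    \<exists>ps. list_all (stabilizing_root k) ps \<and> transvections ps a = last (a # xs)"
proof (induction xs arbitrary: a)
  case Nil
  then show ?case by (intro exI[of _ "[]"]) simp
next
  case (Cons x xs)
  then have step: "root_step k a x" and rest: "successively (root_step k) (x # xs)" by simp_all
  obtain ps where "list_all (stabilizing_root k) ps" "transvections ps x = last (x # xs)"
    using Cons.IH[OF rest] by blast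
  with step show ?case
    by (intro exI[of _ "ps @ [vadd a x]"]) (simp add: root_step_def transvections_append)
qed

lemma joined_transvections:
  assumes "joined k routes a b"
  shows "\<exists>ps. list_all (stabilizing_root k) ps \<and> transvections ps a = b"
proof (cases "a = b")
  case True
  then show ?thesis by (intro exI[of _ "[]"]) simp
next
  case False
  then obtain ms where "successively (root_step k) (a # map char_vec ms @ [b])"
    using assms unfolding joined_def by blast
  from successively_root_step_transvections[OF this] show ?thesis by simp
qed

lemma transvection_stabilizing_unit_vec:
  assumes "stabilizing_root k p" "j < k" "j < 8"
  shows "transvection p (unit_vec j) = unit_vec j"
proof -
  have "\<not> p ! j" using assms by (auto simp: stabilizing_root_def list_all_length root_residue_length)
  then show ?thesis using assms by (simp add: stabilizing_root_def transvection_unit_vec)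
qed

lemma transvections_stabilizing_unit_vec:
  "list_all (stabilizing_root k) ps \<Longrightarrow> j < k \<Longrightarrow> j < 8 \<Longrightarrow> transvections ps (unit_vec j) = unit_vec j"
  by (induction ps) (auto simp: transvection_stabilizing_unit_vec)

lemma isometry_unit_vec_candidate:
  assumes g: "isometry g" and k: "k < 8" and fixed: "\<forall>j<k. g (unit_vec j) = unit_vec j"
  shows "g (unit_vec k) = unit_vec k \<or> stabilizer_candidate k (g (unit_vec k))"
proof -
  define c where "c = g (unit_vec k)"
  have c: "c \<in> F8" by (simp add: c_def isometry_F8[OF g])
  have "\<not> c ! j" if "j < k" for j
  proof -
    have "c ! j \<longleftrightarrow> bdot (g (unit_vec k)) (g (unit_vec j))"
      using c that k fixed by (simp add: c_def bdot_unit_vec F8_def)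
    also have "\<dots> \<longleftrightarrow> unit_vec k ! j"
      using that k by (simp add: isometry_bdot[OF g] bdot_unit_vec)
    finally show ?thesis using that k by (simp add: unit_vec_def nth_char_vec)
  qed
  then have "list_all Not (take k c)" by (simp add: list_all_length)
  moreover have "q4 c = q4 (unit_vec k)" by (simp add: c_def isometry_q4[OF g])
  moreover have "q4 (vadd c ones8) = q4 (vadd (unit_vec k) ones8)"
  proof -
    have "vadd c ones8 = g (vadd (unit_vec k) ones8)"
      by (simp add: c_def isometry_vadd[OF g] isometry_ones8[OF g])
    then show ?thesis by (simp add: isometry_q4[OF g])
  qed
  moreover have "c = unit_vec k" if "c = char_vec [k..<8]"
  proof -
    have "g (char_vec [0..<k]) = char_vec [0..<k]"
      using fixed k by (intro isometry_fixes_char_vec[OF g]) auto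
    then have "g (char_vec [k..<8]) = char_vec [k..<8]"
      by (simp add: char_vec_upper isometry_vadd[OF g] isometry_ones8[OF g])
    moreover have "inj_on g F8" using g by (simp add: isometry_def bij_betw_def)
    ultimately have "unit_vec k = char_vec [k..<8]"
      using that unfolding c_def by (metis F8_consts(3,4) inj_onD)
    then show ?thesis using that by simp
  qed
  ultimately show ?thesis unfolding stabilizer_candidate_def c_def by blast
qed

lemma isometry_move_unit_vec:
  assumes "isometry g" "k < 8" "\<forall>j<k. g (unit_vec j) = unit_vec j"
  shows "\<exists>ps. list_all (stabilizing_root k) ps \<and> transvections ps (g (unit_vec k)) = unit_vec k"
proof -
  have "joined k (stabilizer_routes k) (g (unit_vec k)) (unit_vec k)"
  proof (cases "g (unit_vec k) = unit_vec k")
    case False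
    then have "stabilizer_candidate k (g (unit_vec k))"
      using isometry_unit_vec_candidate[OF assms] by blast
    then show ?thesis
      using stabilizer_routes_valid assms(2) isometry_F8[OF assms(1), of "unit_vec k"]
      by (simp add: set_F8_list)
  qed (simp add: joined_def)
  then show ?thesis by (rule joined_transvections)
qed

lemma isometry_fixing_unit_vecs_below:
  assumes "k \<le> 8" "isometry g" "\<forall>j<k. g (unit_vec j) = unit_vec j"
  shows "\<exists>ps. list_all root_residue ps \<and> (\<forall>v\<in>F8. g v = transvections ps v)"
  using assms
proof (induction k arbitrary: g rule: inc_induct)
  case base
  then show ?case by (intro exI[of _ "[]"]) (simp add: isometry_fixing_unit_vecs)
next
  case (step k)
  obtain qs where qs: "list_all (stabilizing_root k) qs" "transvections qs (g (unit_vec k)) = unit_vec k"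
    using isometry_move_unit_vec[OF step.prems(1) step.hyps(2) step.prems(2)] by blast
  have roots: "list_all root_residue qs"
    using qs(1) by (auto simp: list_all_iff stabilizing_root_def)
  define h where "h = transvections qs \<circ> g"
  have h: "isometry h" unfolding h_def
    by (intro isometry_comp isometry_transvections roots step.prems(1))
  have "\<forall>j<Suc k. h (unit_vec j) = unit_vec j"
    using step.prems(2) qs step.hyps by (auto simp: h_def less_Suc_eq transvections_stabilizing_unit_vec)
  then obtain ps where ps: "list_all root_residue ps" "\<forall>v\<in>F8. h v = transvections ps v"
    using step.IH h by blast
  have "g v = transvections (rev qs @ ps) v" if "v \<in> F8" for v
  proof -
    have "g v = transvections (rev qs) (h v)"
      using that roots by (simp add: h_def transvections_rev isometry_F8[OF step.prems(1)])
    then show ?thesis using ps(2) that by (simp add: transvections_append)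
  qed
  then show ?case using roots ps(1) by (intro exI[of _ "rev qs @ ps"]) auto
qed

theorem isometry_eq_transvections:
  "isometry g \<Longrightarrow> \<exists>ps. list_all root_residue ps \<and> (\<forall>v\<in>F8. g v = transvections ps v)"
  using isometry_fixing_unit_vecs_below[of 0 g] by simp

section \<open>The discriminant group of L_+\<close>

lemma pic_form_expand:
  "pic_form x y = x 0 * y 0 - (x 1 * y 1 + x 2 * y 2 + x 3 * y 3 + x 4 * y 4 + x 5 * y 5 + x 6 * y 6 + x 7 * y 7)"
proof -
  have "{1..7::nat} = {1,2,3,4,5,6,7}" by auto
  then show ?thesis by (simp add: pic_form_def add.assoc)
qed

lemma pic_form_sym: "pic_form x y = pic_form y x"
  by (simp add: pic_form_def mult.commute)

lemma pic_form_add_left: "pic_form (\<lambda>i. x i + y i) z = pic_form x z + pic_form y z"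
  and pic_form_scale_left: "pic_form (\<lambda>i. c * x i) z = c * pic_form x z"
  by (simp_all add: pic_form_expand algebra_simps)

lemma pic_form_add_right: "pic_form z (\<lambda>i. x i + y i) = pic_form z x + pic_form z y"
  and pic_form_scale_right: "pic_form z (\<lambda>i. c * x i) = c * pic_form z x"
  by (simp_all add: pic_form_sym[of z] pic_form_add_left pic_form_scale_left)

lemma Pic_add: "x \<in> Pic \<Longrightarrow> y \<in> Pic \<Longrightarrow> (\<lambda>i. x i + y i) \<in> Pic"
  and Pic_diff: "x \<in> Pic \<Longrightarrow> y \<in> Pic \<Longrightarrow> (\<lambda>i. x i - y i) \<in> Pic"
  and Pic_zero: "(\<lambda>i. 0) \<in> Pic"
  by (auto simp: Pic_def supp8_def)

lemma pic_form_Ints: "x \<in> Pic \<Longrightarrow> y \<in> Pic \<Longrightarrow> pic_form x y \<in> \<int>"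
  by (auto simp: Pic_def pic_form_expand intro!: Ints_add Ints_mult Ints_diff)

lemma coset_mem: "z \<in> coset x \<longleftrightarrow> (\<lambda>i. z i - x i) \<in> Pic"
  unfolding coset_def Lplus_def by (auto intro!: exI[of _ "\<lambda>i. z i - x i"])

lemma coset_self: "x \<in> coset x"
  by (simp add: coset_mem Pic_zero)

lemma coset_eq_iff: "coset x = coset y \<longleftrightarrow> (\<lambda>i. x i - y i) \<in> Pic"
proof
  assume "coset x = coset y"
  then show "(\<lambda>i. x i - y i) \<in> Pic" using coset_self[of x] by (simp add: coset_mem)
next
  assume xy: "(\<lambda>i. x i - y i) \<in> Pic"
  have "(\<lambda>i. z i - x i) \<in> Pic \<longleftrightarrow> (\<lambda>i. z i - y i) \<in> Pic" for z
    using Pic_add[OF _ xy, of "\<lambda>i. z i - x i"] Pic_diff[OF _ xy, of "\<lambda>i. z i - y i"] by auto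
  then show "coset x = coset y" by (auto simp: coset_mem)
qed

lemma A_add_coset: "A_add (coset x) (coset y) = coset (\<lambda>i. x i + y i)"
proof (intro set_eqI iffI)
  fix z assume "z \<in> A_add (coset x) (coset y)"
  then obtain a b where "a \<in> coset x" "b \<in> coset y" "z = (\<lambda>i. a i + b i)"
    by (auto simp: A_add_def)
  then show "z \<in> coset (\<lambda>i. x i + y i)"
    using Pic_add[of "\<lambda>i. a i - x i" "\<lambda>i. b i - y i"] by (simp add: coset_mem algebra_simps)
next
  fix z assume "z \<in> coset (\<lambda>i. x i + y i)"
  then have "(\<lambda>i. z i - y i) \<in> coset x" by (simp add: coset_mem algebra_simps)
  then show "z \<in> A_add (coset x) (coset y)"
    unfolding A_add_def using coset_self[of y] by force
qed

definition int_vec :: "int list \<Rightarrow> qvec" where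
  "int_vec a = (\<lambda>i. if i < length a then of_int (a ! i) else 0)"

definition half_int_vec :: "int list \<Rightarrow> qvec" where
  "half_int_vec a = (\<lambda>i. int_vec a i / 2)"

definition int_form :: "int list \<Rightarrow> int list \<Rightarrow> int" where
  "int_form a b = hd a * hd b - sum_list (map2 (*) (tl a) (tl b))"

definition disc_class :: "bool list \<Rightarrow> qvec set" where
  "disc_class v = coset (half_int_vec (map of_bool v))"

lemma length_8_cases:
  assumes "length xs = 8"
  obtains x0 x1 x2 x3 x4 x5 x6 x7 where "xs = [x0, x1, x2, x3, x4, x5, x6, x7]"
  using assms by (auto simp: numeral_eq_Suc length_Suc_conv)

lemma pic_form_int_vec:
  assumes "length a = 8" "length b = 8"
  shows "pic_form (int_vec a) (int_vec b) = of_int (int_form a b)"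
  using assms by (elim length_8_cases) (simp add: pic_form_expand int_vec_def int_form_def)

lemma pic_form_half_int_vec: "pic_form (half_int_vec a) y = pic_form (int_vec a) y / 2"
  using pic_form_scale_left[of "1/2" "int_vec a" y] by (simp add: half_int_vec_def)

lemma int_vec_Pic: "length a = 8 \<Longrightarrow> int_vec a \<in> Pic"
  by (auto simp: Pic_def supp8_def int_vec_def)

lemma Pic_eq_int_vec: "Pic = int_vec ` {a. length a = 8}"
proof (intro set_eqI iffI)
  fix x assume x: "x \<in> Pic"
  define a where "a = map (\<lambda>i. \<lfloor>x i\<rfloor>) [0..<8]"
  have "x = int_vec a"
    using x by (auto simp: Pic_def supp8_def int_vec_def a_def not_less)
  then show "x \<in> int_vec ` {a. length a = 8}" by (auto simp: a_def)
qed (auto simp: int_vec_Pic)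

lemma half_Ints_iff: "(of_int n / 2 :: rat) \<in> \<int> \<longleftrightarrow> even n"
proof
  assume "of_int n / 2 \<in> (\<int> :: rat set)"
  then obtain m where "of_int n / 2 = (of_int m :: rat)" by (auto elim: Ints_cases)
  then have "n = 2 * m" by (simp add: field_simps flip: of_int_eq_iff)
  then show "even n" by simp
qed auto

lemma coset_half_int_vec_eq_iff:
  assumes "length a = 8" "length b = 8"
  shows "coset (half_int_vec a) = coset (half_int_vec b) \<longleftrightarrow> map odd a = map odd b"
proof -
  have "coset (half_int_vec a) = coset (half_int_vec b) \<longleftrightarrow> (\<forall>i<8. even (a ! i - b ! i))"
    unfolding coset_eq_iff Pic_def supp8_def half_int_vec_def int_vec_def using assms
    by (auto simp: half_Ints_iff simp flip: diff_divide_distrib of_int_diff)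
  also have "\<dots> \<longleftrightarrow> map odd a = map odd b"
    using assms by (auto simp: list_eq_iff_nth_eq)
  finally show ?thesis .
qed

lemma disc_class_eq_iff: "v \<in> F8 \<Longrightarrow> w \<in> F8 \<Longrightarrow> disc_class v = disc_class w \<longleftrightarrow> v = w"
  by (simp add: disc_class_def coset_half_int_vec_eq_iff F8_def comp_def)

lemma coset_half_int_vec: "length a = 8 \<Longrightarrow> coset (half_int_vec a) = disc_class (map odd a)"
  by (simp add: disc_class_def coset_half_int_vec_eq_iff comp_def)

lemma Lp_form_half_int_vec: "length a = 8 \<Longrightarrow> y \<in> Pic \<Longrightarrow> Lp_form (half_int_vec a) y \<in> \<int>"
  by (simp add: Lp_form_def pic_form_half_int_vec pic_form_Ints int_vec_Pic)

(* L_+ carries twice the form of Pic, so its dual lattice is (1/2) Pic. *)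
lemma Lplus_dual_double_Ints: "x \<in> Lplus_dual \<Longrightarrow> 2 * x i \<in> \<int>"
proof (cases "i < 8")
  case True
  assume x: "x \<in> Lplus_dual"
  define e :: qvec where "e = (\<lambda>j. if j = i then 1 else 0)"
  have "e \<in> Pic" using True by (auto simp: Pic_def supp8_def e_def)
  then have "Lp_form x e \<in> \<int>" using x by (simp add: Lplus_dual_def Lplus_def)
  moreover have "Lp_form x e = (if i = 0 then 2 * x i else - (2 * x i))"
  proof -
    have "i = 0 \<or> i = 1 \<or> i = 2 \<or> i = 3 \<or> i = 4 \<or> i = 5 \<or> i = 6 \<or> i = 7" using True by auto
    then show ?thesis by (elim disjE) (simp_all add: Lp_form_def pic_form_expand e_def)
  qed
  ultimately show ?thesis by (simp split: if_splits)
qed (simp add: Lplus_dual_def supp8_def)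

lemma Lplus_dual_eq: "Lplus_dual = half_int_vec ` {a. length a = 8}"
proof (intro set_eqI iffI)
  fix x assume x: "x \<in> Lplus_dual"
  define a where "a = map (\<lambda>i. \<lfloor>2 * x i\<rfloor>) [0..<8]"
  have "x i = half_int_vec a i" for i
  proof (cases "i < 8")
    case True
    obtain n where "2 * x i = of_int n" using Lplus_dual_double_Ints[OF x] by (auto elim: Ints_cases)
    then show ?thesis using True by (simp add: a_def half_int_vec_def int_vec_def)
  qed (use x in \<open>simp add: a_def half_int_vec_def int_vec_def Lplus_dual_def supp8_def\<close>)
  then have "x = half_int_vec a" ..
  then show "x \<in> half_int_vec ` {a. length a = 8}" by (auto simp: a_def)
next
  fix x assume "x \<in> half_int_vec ` {a. length a = 8}"
  then obtain a where a: "length a = 8" and x: "x = half_int_vec a" by blast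
  have "supp8 (half_int_vec a)" by (simp add: supp8_def half_int_vec_def int_vec_def a)
  then show "x \<in> Lplus_dual"
    unfolding x Lplus_dual_def Lplus_def using Lp_form_half_int_vec[OF a] by blast
qed

lemma A_Lp_eq: "A_Lp = disc_class ` F8"
proof -
  have "A_Lp = (\<lambda>a. disc_class (map odd a)) ` {a :: int list. length a = 8}"
    unfolding A_Lp_def Lplus_dual_eq image_image by (intro image_cong refl) (simp add: coset_half_int_vec)
  also have "\<dots> = disc_class ` F8"
  proof -
    have "map odd ` {a :: int list. length a = 8} = F8"
    proof (intro set_eqI iffI)
      fix v assume "v \<in> F8"
      then have "map odd (map of_bool v :: int list) = v" "length (map of_bool v :: int list) = 8"
        by (simp_all add: F8_def comp_def)
      then show "v \<in> map odd ` {a :: int list. length a = 8}" by (metis (mono_tags) imageI mem_Collect_eq)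
    qed (auto simp: F8_def)
    then show ?thesis by (metis image_image)
  qed
  finally show ?thesis .
qed

lemma disc_class_A_Lp: "v \<in> F8 \<Longrightarrow> disc_class v \<in> A_Lp"
  by (simp add: A_Lp_eq)

lemma bij_betw_disc_class: "bij_betw disc_class F8 A_Lp"
  by (auto simp: bij_betw_def A_Lp_eq inj_on_def disc_class_eq_iff)

lemma A_add_disc_class: "v \<in> F8 \<Longrightarrow> w \<in> F8 \<Longrightarrow> A_add (disc_class v) (disc_class w) = disc_class (vadd v w)"
proof -
  assume "v \<in> F8" "w \<in> F8"
  then have l: "length v = 8" "length w = 8" by (simp_all add: F8_def)
  have sum: "(\<lambda>i. half_int_vec (map of_bool v) i + half_int_vec (map of_bool w) i)
      = half_int_vec (map2 (+) (map of_bool v) (map of_bool w))"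
  proof
    fix i
    show "half_int_vec (map of_bool v) i + half_int_vec (map of_bool w) i
      = half_int_vec (map2 (+) (map of_bool v) (map of_bool w)) i"
      using l by (cases "i < 8") (simp_all add: half_int_vec_def int_vec_def add_divide_distrib)
  qed
  have "A_add (disc_class v) (disc_class w) = coset (half_int_vec (map2 (+) (map of_bool v) (map of_bool w)))"
    by (simp only: disc_class_def A_add_coset sum)
  also have "\<dots> = disc_class (map odd (map2 (+) (map of_bool v) (map of_bool w) :: int list))"
    using l by (intro coset_half_int_vec) simp
  also have "map odd (map2 (+) (map of_bool v) (map of_bool w) :: int list) = vadd v w"
    using l by (intro nth_equalityI) (auto simp: nth_vadd)
  finally show ?thesis .
qed

lemma Lp_form_coset_rep:
  assumes "x \<in> Lplus_dual" "v \<in> Pic"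
  shows "\<exists>k::int. Lp_form (\<lambda>i. x i + v i) (\<lambda>i. x i + v i) = Lp_form x x + 2 * of_int k"
proof -
  obtain a b where "Lp_form x v = of_int a" "pic_form v v = of_int b"
    using assms pic_form_Ints[of v v] by (auto simp: Lplus_dual_def Lplus_def elim!: Ints_cases)
  moreover have "Lp_form (\<lambda>i. x i + v i) (\<lambda>i. x i + v i) = Lp_form x x + 2 * Lp_form x v + 2 * pic_form v v"
    by (simp add: Lp_form_def pic_form_add_left pic_form_add_right pic_form_sym[of v x] algebra_simps)
  ultimately show ?thesis by (intro exI[of _ "a + b"]) simp
qed

lemma q_is_coset:
  assumes "x \<in> Lplus_dual"
  shows "q_is (coset x) r \<longleftrightarrow> (\<exists>k::int. Lp_form x x = r + 2 * of_int k)"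
proof
  assume "q_is (coset x) r"
  then obtain y k where y: "y \<in> coset x" and k: "Lp_form y y = r + 2 * of_int k"
    by (auto simp: q_is_def)
  define v where "v = (\<lambda>i. y i - x i)"
  have "v \<in> Pic" "y = (\<lambda>i. x i + v i)" using y by (auto simp: coset_mem v_def)
  then obtain m :: int where "Lp_form y y = Lp_form x x + 2 * of_int m"
    using Lp_form_coset_rep[OF assms] by blast
  then show "\<exists>k::int. Lp_form x x = r + 2 * of_int k"
    using k by (intro exI[of _ "k - m"]) simp
qed (auto simp: q_is_def intro: coset_self)

lemma int_form_of_bool:
  "v \<noteq> [] \<Longrightarrow> int_form (map of_bool v) (map of_bool v) = of_bool (hd v) - int (weight (tl v))"
proof -
  have "sum_list (map2 (*) (map of_bool xs) (map of_bool xs)) = int (weight xs)" for xs :: "bool list"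
    by (induction xs) auto
  then show "v \<noteq> [] \<Longrightarrow> ?thesis" by (cases v) (simp_all add: int_form_def)
qed

lemma Lp_form_half_int_vec_self:
  assumes "length a = 8"
  shows "Lp_form (half_int_vec a) (half_int_vec a) = of_int (int_form a a) / 2"
proof -
  have "pic_form (int_vec a) (half_int_vec a) = pic_form (half_int_vec a) (int_vec a)"
    by (rule pic_form_sym)
  then show ?thesis using assms by (simp add: Lp_form_def pic_form_half_int_vec pic_form_int_vec)
qed

lemma half_int_congruent_iff:
  fixes r :: rat and n t :: int
  assumes "2 * r = of_int t"
  shows "(\<exists>k::int. of_int n / 2 = r + 2 * of_int k) \<longleftrightarrow> n mod 4 = t mod 4"
proof -
  have "of_int n / 2 = r + 2 * of_int k \<longleftrightarrow> n = t + 4 * k" for k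
  proof -
    have "of_int n / 2 = r + 2 * of_int k \<longleftrightarrow> (of_int n :: rat) = of_int (t + 4 * k)"
      using assms by (auto simp: field_simps)
    then show ?thesis by (simp only: of_int_eq_iff)
  qed
  then have "(\<exists>k::int. of_int n / 2 = r + 2 * of_int k) \<longleftrightarrow> 4 dvd (n - t)"
    by (auto simp: dvd_def algebra_simps)
  then show ?thesis by (simp add: mod_eq_dvd_iff)
qed

lemma q_is_disc_class:
  assumes v: "v \<in> F8" and t: "2 * r = of_int t"
  shows "q_is (disc_class v) r \<longleftrightarrow> q4 v = t mod 4"
proof -
  have l: "length (map of_bool v :: int list) = 8" "v \<noteq> []" using v by (auto simp: F8_def)
  then have "q_is (disc_class v) r
      \<longleftrightarrow> (\<exists>k::int. of_int (int_form (map of_bool v) (map of_bool v)) / 2 = r + 2 * of_int k)"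
    unfolding disc_class_def Lp_form_half_int_vec_self[OF l(1), symmetric]
    by (intro q_is_coset) (simp add: Lplus_dual_eq)
  also have "\<dots> \<longleftrightarrow> int_form (map of_bool v) (map of_bool v) mod 4 = t mod 4"
    by (rule half_int_congruent_iff[OF t])
  finally show ?thesis using l(2) by (simp add: int_form_of_bool q4_def)
qed

section \<open>W(E_7) maps onto O(A_{L_+})\<close>

lemma refl_int_vec:
  assumes "length a = 8" "length b = 8"
  shows "refl (int_vec b) (int_vec a) = int_vec (map2 (\<lambda>x y. x + int_form a b * y) a b)"
proof
  fix i
  show "refl (int_vec b) (int_vec a) i = int_vec (map2 (\<lambda>x y. x + int_form a b * y) a b) i"
    unfolding refl_def pic_form_int_vec[OF assms] using assms by (cases "i < 8") (simp_all add: int_vec_def)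
qed

lemma refl_half_int_vec:
  assumes "length a = 8" "length b = 8"
  shows "refl (int_vec b) (half_int_vec a) = half_int_vec (map2 (\<lambda>x y. x + int_form a b * y) a b)"
proof
  fix i
  show "refl (int_vec b) (half_int_vec a) i = half_int_vec (map2 (\<lambda>x y. x + int_form a b * y) a b) i"
    unfolding refl_def pic_form_half_int_vec pic_form_int_vec[OF assms] using assms
    by (cases "i < 8") (simp_all add: half_int_vec_def int_vec_def field_simps)
qed

lemma refl_refl:
  assumes "pic_form r r = -2"
  shows "refl r (refl r x) = x"
proof -
  have "pic_form (refl r x) r = - pic_form x r"
    using assms by (simp add: refl_def pic_form_add_left pic_form_scale_left)
  then show ?thesis by (simp add: refl_def[of r "refl r x"]) (simp add: refl_def)
qed

lemma inj_refl: "pic_form r r = -2 \<Longrightarrow> inj (refl r)"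
  by (rule inj_on_inverseI[where g = "refl r"]) (rule refl_refl)

lemma refl_add: "refl r (\<lambda>i. x i + y i) = (\<lambda>i. refl r x i + refl r y i)"
  by (simp add: refl_def pic_form_add_left algebra_simps)

lemma pic_form_refl:
  assumes "pic_form r r = -2"
  shows "pic_form (refl r x) (refl r y) = pic_form x y"
proof -
  have "pic_form (refl r x) (refl r y) = pic_form x y + pic_form y r * pic_form x r
      + pic_form x r * pic_form r y + pic_form x r * pic_form y r * pic_form r r"
    unfolding refl_def
    by (simp only: pic_form_add_left pic_form_add_right pic_form_scale_left pic_form_scale_right)
  then show ?thesis using assms pic_form_sym[of r y] by (simp add: algebra_simps)
qed

lemma refl_image:
  assumes "pic_form r r = -2" "\<And>x. x \<in> S \<Longrightarrow> refl r x \<in> S"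
  shows "refl r ` S = S"
proof
  show "refl r ` S \<subseteq> S" using assms(2) by blast
  show "S \<subseteq> refl r ` S"
  proof
    fix x assume "x \<in> S"
    then have "x = refl r (refl r x)" "refl r x \<in> S" using refl_refl[OF assms(1)] assms(2) by auto
    then show "x \<in> refl r ` S" by blast
  qed
qed

lemma E7_root_int_vec:
  assumes "r \<in> E7_roots"
  obtains b where "length b = 8" "r = int_vec b" "pic_form r r = -2"
  using assms by (auto simp: E7_roots_def Pic_eq_int_vec)

lemma refl_image_Pic:
  assumes "r \<in> E7_roots"
  shows "refl r ` Pic = Pic"
proof -
  obtain b where b: "length b = 8" "r = int_vec b" "pic_form r r = -2"
    using assms by (rule E7_root_int_vec)
  show ?thesis
  proof (rule refl_image[OF b(3)])
    fix x assume "x \<in> Pic"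
    then obtain a where "length a = 8" "x = int_vec a" by (auto simp: Pic_eq_int_vec)
    then show "refl r x \<in> Pic" using b by (simp add: refl_int_vec int_vec_Pic)
  qed
qed

lemma refl_image_Lplus_dual:
  assumes "r \<in> E7_roots"
  shows "refl r ` Lplus_dual = Lplus_dual"
proof -
  obtain b where b: "length b = 8" "r = int_vec b" "pic_form r r = -2"
    using assms by (rule E7_root_int_vec)
  show ?thesis
  proof (rule refl_image[OF b(3)])
    fix x assume "x \<in> Lplus_dual"
    then obtain a where "length a = 8" "x = half_int_vec a" by (auto simp: Lplus_dual_eq)
    then show "refl r x \<in> Lplus_dual" using b by (auto simp: refl_half_int_vec Lplus_dual_eq)
  qed
qed

lemma W_E7_add: "w \<in> W_E7 \<Longrightarrow> w (\<lambda>i. x i + y i) = (\<lambda>i. w x i + w y i)"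
  by (induction rule: W_E7.induct) (simp_all add: refl_add)

lemma W_E7_pic_form: "w \<in> W_E7 \<Longrightarrow> pic_form (w x) (w y) = pic_form x y"
  by (induction rule: W_E7.induct) (simp_all add: pic_form_refl E7_roots_def)

lemma W_E7_inj: "w \<in> W_E7 \<Longrightarrow> inj w"
proof (induction rule: W_E7.induct)
  case (W_step r w)
  then show ?case by (intro inj_compose inj_refl) (simp_all add: E7_roots_def)
qed simp

lemma W_E7_image_Pic: "w \<in> W_E7 \<Longrightarrow> w ` Pic = Pic"
proof (induction rule: W_E7.induct)
  case (W_step r w)
  then show ?case by (simp only: image_comp[symmetric] refl_image_Pic)
qed simp

lemma W_E7_image_Lplus_dual: "w \<in> W_E7 \<Longrightarrow> w ` Lplus_dual = Lplus_dual"
proof (induction rule: W_E7.induct)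
  case (W_step r w)
  then show ?case by (simp only: image_comp[symmetric] refl_image_Lplus_dual)
qed simp

lemma W_act_coset:
  assumes w: "w \<in> W_E7"
  shows "W_act w (coset x) = coset (w x)"
proof -
  have "coset x = (\<lambda>v i. x i + v i) ` Pic" by (auto simp: coset_def Lplus_def)
  then have "W_act w (coset x) = (\<lambda>v i. w x i + w v i) ` Pic"
    by (simp add: W_act_def image_image W_E7_add[OF w])
  also have "\<dots> = (\<lambda>v i. w x i + v i) ` (w ` Pic)" by (simp add: image_image)
  also have "\<dots> = coset (w x)" by (auto simp: W_E7_image_Pic[OF w] coset_def Lplus_def)
  finally show ?thesis .
qed

lemma W_act_A_add:
  assumes w: "w \<in> W_E7"
  shows "W_act w (A_add a b) = A_add (W_act w a) (W_act w b)"
proof (intro set_eqI iffI)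
  fix z assume "z \<in> W_act w (A_add a b)"
  then obtain x y where "x \<in> a" "y \<in> b" "z = w (\<lambda>i. x i + y i)"
    by (auto simp: W_act_def A_add_def)
  then show "z \<in> A_add (W_act w a) (W_act w b)"
    unfolding W_act_def A_add_def using W_E7_add[OF w] by blast
next
  fix z assume "z \<in> A_add (W_act w a) (W_act w b)"
  then obtain x y where xy: "x \<in> a" "y \<in> b" and z: "z = (\<lambda>i. w x i + w y i)"
    by (auto simp: W_act_def A_add_def)
  have "(\<lambda>i. x i + y i) \<in> A_add a b" using xy by (auto simp: A_add_def)
  then show "z \<in> W_act w (A_add a b)" by (simp add: W_act_def z flip: W_E7_add[OF w])
qed

theorem W_act_in_O_A:
  assumes w: "w \<in> W_E7"
  shows "W_act w \<in> O_A"
  unfolding O_A_def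
proof (intro CollectI conjI ballI allI)
  have "W_act w ` A_Lp = coset ` w ` Lplus_dual"
    by (simp add: A_Lp_def W_act_coset[OF w] image_image)
  moreover have "inj_on (W_act w) A_Lp"
    using W_E7_inj[OF w] by (simp add: inj_on_def W_act_def inj_image_eq_iff)
  ultimately show "bij_betw (W_act w) A_Lp A_Lp"
    by (simp add: bij_betw_def A_Lp_def W_E7_image_Lplus_dual[OF w])
next
  fix a b
  show "W_act w (A_add a b) = A_add (W_act w a) (W_act w b)"
    by (rule W_act_A_add[OF w])
next
  fix a r
  show "q_is (W_act w a) r \<longleftrightarrow> q_is a r"
    by (auto simp: q_is_def W_act_def Lp_form_def W_E7_pic_form[OF w])
qed

lemma odd_int_form:
  assumes "length a = length b" "a \<noteq> []"
  shows "odd (int_form a b) \<longleftrightarrow> bdot (map odd a) (map odd b)"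
proof -
  have "odd (sum_list (map2 (*) xs ys)) \<longleftrightarrow> odd (weight (map2 (\<and>) (map odd xs) (map odd ys)))"
    if "length xs = length ys" for xs ys :: "int list"
    using that by (induction xs ys rule: list_induct2) auto
  then show ?thesis using assms by (cases a; cases b) (auto simp: int_form_def bdot_def)
qed

lemma refl_in_W_E7: "r \<in> E7_roots \<Longrightarrow> refl r \<in> W_E7"
  using W_step[OF _ W_id, of r] by simp

lemma W_act_refl_disc_class:
  assumes r: "length r = 8" "int_vec r \<in> E7_roots" and v: "v \<in> F8"
  shows "W_act (refl (int_vec r)) (disc_class v) = disc_class (transvection (map odd r) v)"
proof -
  define a :: "int list" where "a = map of_bool v"
  define m where "m = int_form a r"
  have a: "length a = 8" "a \<noteq> []" using v by (auto simp: F8_def a_def)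
  have "W_act (refl (int_vec r)) (disc_class v) = coset (refl (int_vec r) (half_int_vec a))"
    unfolding disc_class_def a_def by (rule W_act_coset[OF refl_in_W_E7[OF r(2)]])
  also have "\<dots> = coset (half_int_vec (map2 (\<lambda>x y. x + m * y) a r))"
    by (simp add: refl_half_int_vec a r m_def)
  also have "\<dots> = disc_class (map odd (map2 (\<lambda>x y. x + m * y) a r))"
    by (rule coset_half_int_vec) (simp add: a r)
  also have "map odd (map2 (\<lambda>x y. x + m * y) a r) = transvection (map odd r) v"
  proof -
    have "odd m \<longleftrightarrow> bdot (map odd r) v"
      using odd_int_form[of a r] a r by (simp add: m_def a_def comp_def bdot_comm)
    then show ?thesis
      using a r v by (intro nth_equalityI) (auto simp: transvection_def nth_vadd a_def F8_def)
  qed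
  finally show ?thesis .
qed

definition canon_list :: "int list" where
  "canon_list = [-3, 1, 1, 1, 1, 1, 1, 1]"

lemma canon_int_vec: "canon = int_vec canon_list"
proof
  fix i :: nat
  have "i < 8 \<Longrightarrow> i = 0 \<or> i = 1 \<or> i = 2 \<or> i = 3 \<or> i = 4 \<or> i = 5 \<or> i = 6 \<or> i = 7" by auto
  then show "canon i = int_vec canon_list i"
    by (cases "i < 8") (auto simp: canon_def int_vec_def canon_list_def)
qed

(* According to the shape of p, the lift is a root e_0 - e_i - e_j - e_k, 2 e_0 - (six e_i)
   or e_i - e_j. *)
definition root_lift :: "bool list \<Rightarrow> int list" where
  "root_lift p =
    (if hd p then map (\<lambda>i. if i = 0 then 1 else - of_bool (p ! i)) [0..<8]
     else if weight p = 6 then map (\<lambda>i. if i = 0 then 2 else - of_bool (p ! i)) [0..<8]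
     else map (\<lambda>i. if p ! i then (if i = hd (filter ((!) p) [0..<8]) then 1 else -1) else 0) [0..<8])"

lemma root_lift_valid:
  "\<forall>p\<in>set F8_list. root_residue p \<longrightarrow> length (root_lift p) = 8 \<and> int_form (root_lift p) canon_list = 0
     \<and> int_form (root_lift p) (root_lift p) = -2 \<and> map odd (root_lift p) = p"
  by code_simp

lemma root_lift:
  assumes "root_residue p"
  shows "length (root_lift p) = 8" "int_vec (root_lift p) \<in> E7_roots" "map odd (root_lift p) = p"
proof -
  have p: "p \<in> set F8_list" using assms by (simp add: set_F8_list F8_def root_residue_def)
  show l: "length (root_lift p) = 8" and "map odd (root_lift p) = p"
    using root_lift_valid p assms by auto
  show "int_vec (root_lift p) \<in> E7_roots"
    using root_lift_valid p assms l
    by (auto simp: E7_roots_def int_vec_Pic canon_int_vec pic_form_int_vec canon_list_def)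
qed

definition weyl_lift :: "bool list list \<Rightarrow> qvec \<Rightarrow> qvec" where
  "weyl_lift ps = foldr (\<lambda>p w. refl (int_vec (root_lift p)) \<circ> w) ps id"

lemma weyl_lift_in_W_E7: "list_all root_residue ps \<Longrightarrow> weyl_lift ps \<in> W_E7"
  by (induction ps) (auto simp: weyl_lift_def root_lift intro: W_id W_step)

lemma W_act_weyl_lift:
  "list_all root_residue ps \<Longrightarrow> v \<in> F8 \<Longrightarrow>
    W_act (weyl_lift ps) (disc_class v) = disc_class (transvections ps v)"
proof (induction ps)
  case Nil
  then show ?case by (simp add: weyl_lift_def W_act_def)
next
  case (Cons p ps)
  have "W_act (weyl_lift (p # ps)) (disc_class v)
      = W_act (refl (int_vec (root_lift p))) (W_act (weyl_lift ps) (disc_class v))"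
    by (simp add: weyl_lift_def W_act_def image_comp)
  also have "\<dots> = disc_class (transvection p (transvections ps v))"
    using Cons by (simp add: W_act_refl_disc_class root_lift transvections_F8)
  finally show ?case by simp
qed

lemma q4_mod_4: "q4 v mod 4 = q4 v"
  by (simp add: q4_def)

definition induced_map :: "(qvec set \<Rightarrow> qvec set) \<Rightarrow> bool list \<Rightarrow> bool list" where
  "induced_map f v = inv_into F8 disc_class (f (disc_class v))"

lemma induced_map:
  assumes "f \<in> O_A" "v \<in> F8"
  shows "induced_map f v \<in> F8" "disc_class (induced_map f v) = f (disc_class v)"
proof -
  have "f (disc_class v) \<in> disc_class ` F8"
    using assms bij_betwE[of f A_Lp A_Lp] by (auto simp: O_A_def A_Lp_eq)
  then show "induced_map f v \<in> F8" "disc_class (induced_map f v) = f (disc_class v)"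
    by (simp_all add: induced_map_def inv_into_into f_inv_into_f)
qed

lemma isometry_induced_map:
  assumes f: "f \<in> O_A"
  shows "isometry (induced_map f)"
  unfolding isometry_def
proof (intro conjI ballI)
  have "induced_map f = inv_into F8 disc_class \<circ> (f \<circ> disc_class)"
    by (simp add: fun_eq_iff induced_map_def)
  then show "bij_betw (induced_map f) F8 F8"
    using f unfolding O_A_def
    by (auto intro!: bij_betw_trans bij_betw_disc_class bij_betw_inv_into[OF bij_betw_disc_class])
next
  fix a b assume ab: "a \<in> F8" "b \<in> F8"
  have "disc_class (induced_map f (vadd a b)) = f (A_add (disc_class a) (disc_class b))"
    using ab by (simp add: induced_map[OF f] A_add_disc_class)
  also have "\<dots> = A_add (disc_class (induced_map f a)) (disc_class (induced_map f b))"
    using f ab by (simp add: O_A_def disc_class_A_Lp induced_map[OF f])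
  also have "\<dots> = disc_class (vadd (induced_map f a) (induced_map f b))"
    using ab by (simp add: A_add_disc_class induced_map(1)[OF f])
  finally show "induced_map f (vadd a b) = vadd (induced_map f a) (induced_map f b)"
    using ab by (simp add: disc_class_eq_iff induced_map(1)[OF f])
next
  fix v assume v: "v \<in> F8"
  define r :: rat where "r = of_int (q4 v) / 2"
  have "q_is (disc_class v) r" using v by (simp add: q_is_disc_class r_def q4_mod_4)
  then have "q_is (disc_class (induced_map f v)) r"
    using f v by (simp add: O_A_def induced_map(2) disc_class_A_Lp)
  then show "q4 (induced_map f v) = q4 v"
    using induced_map(1)[OF f v] by (simp add: q_is_disc_class r_def q4_mod_4)
qed

lemma O_A_eq_transvections:
  assumes "f \<in> O_A"
  obtains ps where "list_all root_residue ps" "\<And>v. v \<in> F8 \<Longrightarrow> f (disc_class v) = disc_class (transvections ps v)"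
proof -
  obtain ps where "list_all root_residue ps" "\<forall>v\<in>F8. induced_map f v = transvections ps v"
    using isometry_eq_transvections[OF isometry_induced_map[OF assms]] by blast
  with induced_map(2)[OF assms] show ?thesis by (intro that[of ps]) auto
qed

theorem O_A_eq_W_act:
  assumes "f \<in> O_A"
  shows "\<exists>w\<in>W_E7. \<forall>a\<in>A_Lp. f a = W_act w a"
proof -
  obtain ps where ps: "list_all root_residue ps"
    and f: "\<And>v. v \<in> F8 \<Longrightarrow> f (disc_class v) = disc_class (transvections ps v)"
    using O_A_eq_transvections[OF assms] by blast
  have "\<forall>a\<in>A_Lp. f a = W_act (weyl_lift ps) a"
    using ps f by (auto simp: A_Lp_eq W_act_weyl_lift)
  with weyl_lift_in_W_E7[OF ps] show ?thesis by blast
qed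

section \<open>Orbits\<close>

(* For each value q of q4: a representative of the level q4 = q, and routes from it to all other
   vectors of that level except zero8 and ones8. *)
definition orbit_witnesses :: "(int \<times> nat list \<times> nat list list list) list" where
  "orbit_witnesses =
    [(0, [1,2,3,4], [[[4,5,6,7]], [[3,5,6,7]], [[2,5,6,7]], [[2,3,4,7]], [[2,3,4,6]]]),
     (1, [0], [[[5,6,7]], [[4,6,7]], [[3,5,7]], [[2,4,6]], [[5,6,7], [0,3,4,6,7]]]),
     (2, [1,2], [[[2,7]], [[2,6]], [[2,5]], [[2,4]], [[2,3]]]),
     (3, [1], [[[7]], [[3,4,5,6,7]], [[0,2,7]], [[7], [1,3,4,5,6]]])]"

lemma orbit_witnesses_valid:
  "\<forall>(q, rep, routes)\<in>set orbit_witnesses. q4 (char_vec rep) = q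
     \<and> char_vec rep \<noteq> zero8 \<and> char_vec rep \<noteq> ones8
     \<and> (\<forall>v\<in>set F8_list. q4 v = q \<and> v \<noteq> zero8 \<and> v \<noteq> ones8 \<longrightarrow> joined 0 routes (char_vec rep) v)"
  by code_simp

definition transvection_orbit :: "bool list \<Rightarrow> bool list set" where
  "transvection_orbit v = {transvections ps v | ps. list_all root_residue ps}"

lemma transvection_orbit_F8: "v \<in> F8 \<Longrightarrow> transvection_orbit v \<subseteq> F8"
  by (auto simp: transvection_orbit_def transvections_F8)

lemma O_orbit_disc_class:
  assumes v: "v \<in> F8"
  shows "O_orbit (disc_class v) = disc_class ` transvection_orbit v"
proof (intro set_eqI iffI)
  fix a assume "a \<in> O_orbit (disc_class v)"
  then obtain f where "f \<in> O_A" "a = f (disc_class v)" by (auto simp: O_orbit_def)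
  then show "a \<in> disc_class ` transvection_orbit v"
    using v by (auto simp: transvection_orbit_def elim!: O_A_eq_transvections)
next
  fix a assume "a \<in> disc_class ` transvection_orbit v"
  then obtain ps where "list_all root_residue ps" "a = disc_class (transvections ps v)"
    by (auto simp: transvection_orbit_def)
  then have "a = W_act (weyl_lift ps) (disc_class v)" "W_act (weyl_lift ps) \<in> O_A"
    using v by (simp_all add: W_act_weyl_lift W_act_in_O_A weyl_lift_in_W_E7)
  then show "a \<in> O_orbit (disc_class v)" by (auto simp: O_orbit_def)
qed

lemma transvection_orbit_transvections:
  assumes ps: "list_all root_residue ps" and v: "v \<in> F8"
  shows "transvection_orbit (transvections ps v) = transvection_orbit v"
proof (intro set_eqI iffI)
  fix x assume "x \<in> transvection_orbit (transvections ps v)"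
  then obtain qs where "list_all root_residue qs" "x = transvections (qs @ ps) v"
    by (auto simp: transvection_orbit_def transvections_append)
  then show "x \<in> transvection_orbit v" using ps by (auto simp: transvection_orbit_def)
next
  fix x assume "x \<in> transvection_orbit v"
  then obtain qs where "list_all root_residue qs" "x = transvections (qs @ rev ps) (transvections ps v)"
    using ps v by (auto simp: transvection_orbit_def transvections_append transvections_rev)
  then show "x \<in> transvection_orbit (transvections ps v)" using ps by (auto simp: transvection_orbit_def)
qed

lemma self_in_transvection_orbit: "v \<in> transvection_orbit v"
  by (auto simp: transvection_orbit_def intro: exI[of _ "[]"])

lemma transvection_orbit_zero8: "transvection_orbit zero8 = {zero8}"
  and transvection_orbit_ones8: "transvection_orbit ones8 = {ones8}"
  by (auto simp: transvection_orbit_def transvections_zero8 transvections_ones8 intro: exI[of _ "[]"])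

lemma transvection_orbit_level:
  assumes "0 \<le> q" "q < 4"
  obtains rep where "rep \<in> F8" "q4 rep = q" "rep \<noteq> zero8" "rep \<noteq> ones8"
    "\<And>v. v \<in> F8 \<Longrightarrow> q4 v = q \<Longrightarrow> v \<noteq> zero8 \<Longrightarrow> v \<noteq> ones8 \<Longrightarrow>
      transvection_orbit v = transvection_orbit rep"
proof -
  have "q \<in> fst ` set orbit_witnesses"
  proof -
    have "q = 0 \<or> q = 1 \<or> q = 2 \<or> q = 3" using assms by auto
    then show ?thesis by (auto simp: orbit_witnesses_def)
  qed
  then obtain xs routes where "(q, xs, routes) \<in> set orbit_witnesses" by force
  from bspec[OF orbit_witnesses_valid this]
  have rep: "q4 (char_vec xs) = q" "char_vec xs \<noteq> zero8" "char_vec xs \<noteq> ones8"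
    and joined: "\<And>v. v \<in> F8 \<Longrightarrow> q4 v = q \<Longrightarrow> v \<noteq> zero8 \<Longrightarrow> v \<noteq> ones8 \<Longrightarrow>
      joined 0 routes (char_vec xs) v"
    by (simp_all add: set_F8_list)
  have orbit: "transvection_orbit v = transvection_orbit (char_vec xs)"
    if v: "v \<in> F8" "q4 v = q" "v \<noteq> zero8" "v \<noteq> ones8" for v
  proof -
    obtain ps where ps: "list_all (stabilizing_root 0) ps" "transvections ps (char_vec xs) = v"
      using joined_transvections[OF joined[OF v]] by blast
    have "list_all root_residue ps" using ps(1) by (simp add: list_all_iff stabilizing_root_def)
    from transvection_orbit_transvections[OF this F8_consts(3)[of xs]] show ?thesis by (simp add: ps(2))
  qed
  show ?thesis by (rule that[OF F8_consts(3) rep orbit])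
qed

lemma transvection_orbits_level:
  assumes "0 \<le> q" "q < 4"
  obtains rep where "rep \<notin> {zero8, ones8}"
    "transvection_orbit ` {v \<in> F8. q4 v = q}
      = insert (transvection_orbit rep) ((\<lambda>x. {x}) ` {x \<in> {zero8, ones8}. q4 x = q})"
proof -
  obtain rep where rep: "rep \<in> F8" "q4 rep = q" "rep \<noteq> zero8" "rep \<noteq> ones8"
    and orbit: "\<And>v. v \<in> F8 \<Longrightarrow> q4 v = q \<Longrightarrow> v \<noteq> zero8 \<Longrightarrow> v \<noteq> ones8 \<Longrightarrow>
      transvection_orbit v = transvection_orbit rep"
    using transvection_orbit_level[OF assms] by blast
  let ?E = "{x \<in> {zero8, ones8}. q4 x = q}"
  have "transvection_orbit ` {v \<in> F8. q4 v = q} = insert (transvection_orbit rep) ((\<lambda>x. {x}) ` ?E)"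
  proof (intro set_eqI iffI)
    fix B assume "B \<in> transvection_orbit ` {v \<in> F8. q4 v = q}"
    then obtain v where v: "v \<in> F8" "q4 v = q" "B = transvection_orbit v" by blast
    show "B \<in> insert (transvection_orbit rep) ((\<lambda>x. {x}) ` ?E)"
    proof (cases "v = zero8 \<or> v = ones8")
      case True
      then show ?thesis using v by (auto simp: transvection_orbit_zero8 transvection_orbit_ones8)
    next
      case False
      then show ?thesis using v orbit[of v] by simp
    qed
  next
    fix B assume "B \<in> insert (transvection_orbit rep) ((\<lambda>x. {x}) ` ?E)"
    then show "B \<in> transvection_orbit ` {v \<in> F8. q4 v = q}"
      using rep image_eqI[of "{zero8}" transvection_orbit zero8] image_eqI[of "{ones8}" transvection_orbit ones8]
      by (auto simp: transvection_orbit_zero8 transvection_orbit_ones8)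
  qed
  with rep(3,4) show ?thesis by (intro that[of rep]) auto
qed

lemma card_transvection_orbits_level:
  assumes "0 \<le> q" "q < 4"
  shows "card (transvection_orbit ` {v \<in> F8. q4 v = q}) = 1 + of_bool (q = 0) + of_bool (q = 2)"
proof -
  define E where "E = {x \<in> {zero8, ones8}. q4 x = q}"
  obtain rep where rep: "rep \<notin> {zero8, ones8}"
    and orbits: "transvection_orbit ` {v \<in> F8. q4 v = q} = insert (transvection_orbit rep) ((\<lambda>x. {x}) ` E)"
    using transvection_orbits_level[OF assms] unfolding E_def by blast
  have "transvection_orbit rep \<notin> (\<lambda>x. {x}) ` E"
    using rep self_in_transvection_orbit[of rep] by (auto simp: E_def)
  then have "card (transvection_orbit ` {v \<in> F8. q4 v = q}) = Suc (card ((\<lambda>x. {x}) ` E))"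
    by (simp add: orbits E_def)
  also have "card ((\<lambda>x. {x}) ` E) = card E" by (rule card_image) (simp add: inj_on_def)
  also have "E = (if q = 0 then {zero8} else {}) \<union> (if q = 2 then {ones8} else {})"
    by (auto simp: E_def q4_def zero8_def ones8_def numeral_eq_Suc)
  finally show ?thesis by (simp add: zero8_def ones8_def)
qed

lemma C_set_eq:
  assumes "2 * r = of_int t"
  shows "C_set r = disc_class ` {v \<in> F8. q4 v = t mod 4}"
  using assms by (auto simp: C_set_def A_Lp_eq q_is_disc_class)

lemma card_O_orbit_C_set:
  assumes "2 * r = of_int t"
  shows "card (O_orbit ` C_set r) = 1 + of_bool (t mod 4 = 0) + of_bool (t mod 4 = 2)"
proof -
  define S where "S = {v \<in> F8. q4 v = t mod 4}"
  have "O_orbit ` C_set r = (image disc_class) ` transvection_orbit ` S"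
    by (simp add: C_set_eq[OF assms] image_image O_orbit_disc_class S_def)
  moreover have "inj_on (image disc_class) (transvection_orbit ` S)"
  proof (rule inj_on_image)
    have "\<Union> (transvection_orbit ` S) \<subseteq> F8" using transvection_orbit_F8 by (auto simp: S_def)
    then show "inj_on disc_class (\<Union> (transvection_orbit ` S))"
      by (rule inj_on_subset[OF bij_betw_imp_inj_on[OF bij_betw_disc_class]])
  qed
  ultimately have "card (O_orbit ` C_set r) = card (transvection_orbit ` S)"
    by (simp add: card_image)
  also have "\<dots> = 1 + of_bool (t mod 4 = 0) + of_bool (t mod 4 = 2)"
    unfolding S_def by (rule card_transvection_orbits_level) simp_all
  finally show ?thesis .
qed

theorem lemma2p6:
  shows "(\<forall>w\<in>W_E7. W_act w \<in> O_A)
    \<and> (\<forall>f\<in>O_A. \<exists>w\<in>W_E7. \<forall>a\<in>A_Lp. f a = W_act w a)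
    \<and> card (O_orbit ` C_set (-1/2)) = 1
    \<and> card (O_orbit ` C_set (1/2)) = 1
    \<and> card (O_orbit ` C_set 1) = 2
    \<and> card (O_orbit ` C_set 0) = 2"
proof (intro conjI)
  show "\<forall>w\<in>W_E7. W_act w \<in> O_A" using W_act_in_O_A by blast
  show "\<forall>f\<in>O_A. \<exists>w\<in>W_E7. \<forall>a\<in>A_Lp. f a = W_act w a" using O_A_eq_W_act by blast
  show "card (O_orbit ` C_set (-1/2)) = 1" using card_O_orbit_C_set[of "-1/2" "-1"] by simp
  show "card (O_orbit ` C_set (1/2)) = 1" using card_O_orbit_C_set[of "1/2" 1] by simp
  show "card (O_orbit ` C_set 1) = 2" using card_O_orbit_C_set[of 1 2] by simp
  show "card (O_orbit ` C_set 0) = 2" using card_O_orbit_C_set[of 0 0] by simp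
qed

end
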